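(* If $R\le\inf_{\lambda\in\Delta_{M(R)}}L\big(\sum_{(i,j)\in M(R)}\lambda_{ij}\tilde\beta_{ij}\big)$ (with the convention that the infimum over an empty index set is $+\infty$), then $\hat S$ is a B-set for the approachability problem with action sets $U=\Delta_K$, $V=(\Delta_{\mathcal X})^K$ and vector payoff $f(w,Q)=\big(\sum_{a}w(a)D(Q_a\|\nu^i_a)\big)_{i\in[m]}$; that is, for every $y\in\mathbb R^m\setminus\hat S$, with $\pi(y)$ its Euclidean projection onto $\hat S$, there exists $w\in\Delta_K$ such that $\langle y-\pi(y),f(w,Q)-\pi(y)\rangle\le0$ for all $Q\in(\Delta_{\mathcal X})^K$.
   Context: $\mathcal X$ finite, $\Delta_{\mathcal X}$ the distributions on $\mathcal X$, $\Delta_K,\Delta_m$ the probability simplices on $[K]$, $[m]$, $D$ the KL divergence; $m\ge2$ bandits $\nu^1,\dots,\nu^m$, $\nu^i=(\nu^i_a)_{a\in[K]}$, with all $\nu^i_a(x)>0$. For $\beta\in\Delta_m$ and $a\in[K]$ let $\phi_a(\beta)=-\log\sum_{x\in\mathcal X}\prod_{i=1}^m\nu^i_a(x)^{\beta_i}$, $I(\beta)=\min_a\phi_a(\beta)$, $L(\beta)=\max_a\phi_a(\beta)$. For $1\le i<j\le m$ and $b\in[0,1]$ let $\beta_{ij}(b)=b\,e_i+(1-b)e_j\in\Delta_m$. Given $R\in\mathbb R$, let $M(R)=\{(i,j):i<j,\ \sup_{b\in[0,1]}I(\beta_{ij}(b))<R\}$, and for each $(i,j)\in M(R)$ fix a point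 $\tilde\beta_{ij}=\beta_{ij}(b_{ij})$ for some $b_{ij}\in[0,1]$. Define $I'(\beta)=R$ if $\beta=\tilde\beta_{ij}$ for some $(i,j)\in M(R)$, and $I'(\beta)=I(\beta)$ otherwise; let $I'_{concave}$ be the upper concave envelope of $I'$ on $\Delta_m$ (the smallest concave function on $\Delta_m$ dominating $I'$ pointwise). Let $\hat S=\{x\in\mathbb R^m:\langle\beta,x\rangle\ge I'_{concave}(\beta)\ \forall\beta\in\Delta_m\}$. $\Delta_{M(R)}$ is the simplex of weights $\lambda=(\lambda_{ij})_{(i,j)\in M(R)}$. *)

theory Defs
  imports "HOL-Analysis.Analysis"
begin

definition distrs :: "('x::finite \<Rightarrow> real) set" where
  "distrs = {p. (\<forall>x. 0 \<le> p x) \<and> (\<Sum>x\<in>UNIV. p x) = 1}"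

definition simplexm :: "((real, 'm::finite) vec) set" where
  "simplexm = {b. (\<forall>i. 0 \<le> b $ i) \<and> (\<Sum>i\<in>UNIV. b $ i) = 1}"

definition KL :: "('x::finite \<Rightarrow> real) \<Rightarrow> ('x \<Rightarrow> real) \<Rightarrow> real" where
  "KL Q P = (\<Sum>x\<in>UNIV. if Q x = 0 then 0 else Q x * ln (Q x / P x))"

text \<open>nu i a x = \<nu>^i_a(x): bandit i, arm a, outcome x.\<close>
definition phi :: "('m::finite \<Rightarrow> 'a \<Rightarrow> 'x::finite \<Rightarrow> real) \<Rightarrow> 'a \<Rightarrow> (real, 'm) vec \<Rightarrow> real" where
  "phi nu a b = - ln (\<Sum>x\<in>UNIV. \<Prod>i\<in>UNIV. nu i a x powr (b $ i))"

definition Ifun :: "('m::finite \<Rightarrow> 'a::finite \<Rightarrow> 'x::finite \<Rightarrow> real) \<Rightarrow> (real, 'm) vec \<Rightarrow> real" where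
  "Ifun nu b = Min ((\<lambda>a. phi nu a b) ` UNIV)"

definition Lfun :: "('m::finite \<Rightarrow> 'a::finite \<Rightarrow> 'x::finite \<Rightarrow> real) \<Rightarrow> (real, 'm) vec \<Rightarrow> real" where
  "Lfun nu b = Max ((\<lambda>a. phi nu a b) ` UNIV)"

definition betaij :: "'m::finite \<Rightarrow> 'm \<Rightarrow> real \<Rightarrow> (real, 'm) vec" where
  "betaij i j t = t *\<^sub>R axis i 1 + (1 - t) *\<^sub>R axis j 1"

definition Mset :: "('m::{finite,linorder} \<Rightarrow> 'a::finite \<Rightarrow> 'x::finite \<Rightarrow> real) \<Rightarrow> real \<Rightarrow> ('m \<times> 'm) set" where
  "Mset nu R = {(i, j). i < j \<and> (SUP t\<in>{0..1}. Ifun nu (betaij i j t)) < R}"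

text \<open>I', with tilde-beta_{ij} = betaij i j (bsel i j).\<close>
definition Iprime :: "('m::{finite,linorder} \<Rightarrow> 'a::finite \<Rightarrow> 'x::finite \<Rightarrow> real) \<Rightarrow> real
    \<Rightarrow> ('m \<Rightarrow> 'm \<Rightarrow> real) \<Rightarrow> (real, 'm) vec \<Rightarrow> real" where
  "Iprime nu R bsel b =
     (if \<exists>(i, j)\<in>Mset nu R. b = betaij i j (bsel i j) then R else Ifun nu b)"

definition concave_env :: "((real, 'm::finite) vec \<Rightarrow> real) \<Rightarrow> (real, 'm) vec \<Rightarrow> real" where
  "concave_env g b = Inf {h b | h. concave_on simplexm h \<and> (\<forall>c\<in>simplexm. g c \<le> h c)}"

definition Shat :: "('m::{finite,linorder} \<Rightarrow> 'a::finite \<Rightarrow> 'x::finite \<Rightarrow> real) \<Rightarrow> real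
    \<Rightarrow> ('m \<Rightarrow> 'm \<Rightarrow> real) \<Rightarrow> ((real, 'm) vec) set" where
  "Shat nu R bsel = {y. \<forall>b\<in>simplexm. concave_env (Iprime nu R bsel) b \<le> inner b y}"

definition payoff :: "('m::finite \<Rightarrow> 'a::finite \<Rightarrow> 'x::finite \<Rightarrow> real) \<Rightarrow> ('a \<Rightarrow> real)
    \<Rightarrow> ('a \<Rightarrow> 'x \<Rightarrow> real) \<Rightarrow> (real, 'm) vec" where
  "payoff nu w Q = (\<chi> i. \<Sum>a\<in>UNIV. w a * KL (Q a) (nu i a))"

end

(*
  Since S-hat is closed, convex and closed upwards, the normal y - pi(y) at the projection is
  -s beta for some s > 0 and beta in the simplex, and pi(y) minimises <beta, .> over S-hat.
  Each phi_a is concave (Hoelder), so mixing a point of the hypograph of I with a point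
  (sum lambda_ij tilde-beta_ij, R) stays in the hypograph of L: the arm attaining L at the second
  point works for the mixture, and this is where the hypothesis on the tilde-beta_ij enters.
  Hence the closed convex hull of the hypograph of I' lies below L, and separating (beta, L(beta) + e)
  from it by a non-vertical hyperplane gives z in S-hat with <beta, z> < L(beta) + e; thus
  <beta, pi(y)> <= L(beta). Playing the arm a maximising phi_a(beta) now suffices, since by Gibbs'
  inequality phi_a(beta) <= sum_i beta_i D(Q_a || nu^i_a) for every Q.
*)
theory Submission
  imports Defs
begin

lemma Holder_sum_powr:
  fixes f g :: "'x::finite \<Rightarrow> real"
  assumes f: "\<And>x. f x > 0" and g: "\<And>x. g x > 0"
    and uv: "0 \<le> u" "0 \<le> v" "u + v = 1"
  shows "(\<Sum>x\<in>UNIV. f x powr u * g x powr v) \<le> (\<Sum>x\<in>UNIV. f x) powr u * (\<Sum>x\<in>UNIV. g x) powr v"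
proof -
  define A where "A = (\<Sum>x\<in>UNIV. f x)"
  define B where "B = (\<Sum>x\<in>UNIV. g x)"
  have A: "A > 0" and B: "B > 0"
    unfolding A_def B_def using f g by (auto intro: sum_pos)
  have "(\<Sum>x\<in>UNIV. f x powr u * g x powr v)
      = A powr u * B powr v * (\<Sum>x\<in>UNIV. (f x / A) powr u * (g x / B) powr v)"
    using A B f g by (simp add: sum_distrib_left powr_divide less_imp_le)
  also have "\<dots> \<le> A powr u * B powr v * (\<Sum>x\<in>UNIV. u * (f x / A) + v * (g x / B))"
    using A B f g uv by (intro mult_left_mono sum_mono Youngs_inequality_0) auto
  also have "(\<Sum>x\<in>UNIV. u * (f x / A) + v * (g x / B)) = 1"
    using A B uv
    by (simp add: sum.distrib flip: sum_distrib_left sum_divide_distrib A_def B_def)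
  finally show ?thesis by (simp add: A_def B_def)
qed

definition tilted :: "('m::finite \<Rightarrow> 'a \<Rightarrow> 'x \<Rightarrow> real) \<Rightarrow> 'a \<Rightarrow> (real, 'm) vec \<Rightarrow> 'x \<Rightarrow> real" where
  "tilted nu a b x = (\<Prod>i\<in>UNIV. nu i a x powr (b $ i))"

lemma phi_eq_tilted: "phi nu a b = - ln (\<Sum>x\<in>UNIV. tilted nu a b x)"
  unfolding phi_def tilted_def by simp

lemma tilted_pos:
  assumes "\<And>i a x. nu i a x > 0"
  shows "tilted nu a b x > 0"
  unfolding tilted_def using assms by (intro prod_pos) (simp add: order_less_imp_not_eq2)

lemma tilted_add:
  assumes pos: "\<And>i a x. nu i a x > 0"
  shows "tilted nu a (u *\<^sub>R b + v *\<^sub>R c) x = tilted nu a b x powr u * tilted nu a c x powr v"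
proof -
  have "tilted nu a (u *\<^sub>R b + v *\<^sub>R c) x
      = (\<Prod>i\<in>UNIV. (nu i a x powr (b $ i)) powr u * (nu i a x powr (c $ i)) powr v)"
    unfolding tilted_def using pos by (simp add: powr_add powr_powr mult.commute)
  also have "\<dots> = tilted nu a b x powr u * tilted nu a c x powr v"
    unfolding tilted_def prod.distrib using pos by (simp add: prod_powr_distrib less_imp_le)
  finally show ?thesis .
qed

lemma concave_phi:
  fixes nu :: "'m::finite \<Rightarrow> 'a \<Rightarrow> 'x::finite \<Rightarrow> real"
  assumes pos: "\<And>i a x. nu i a x > 0"
  shows "concave_on UNIV (phi nu a)"
  unfolding concave_on_iff
proof (intro conjI convex_UNIV ballI allI impI)
  fix b c :: "(real, 'm) vec" and u v :: real
  assume uv: "0 \<le> u" "0 \<le> v" "u + v = 1"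
  define A where "A = (\<Sum>x\<in>UNIV. tilted nu a b x)"
  define B where "B = (\<Sum>x\<in>UNIV. tilted nu a c x)"
  have A: "A > 0" and B: "B > 0"
    unfolding A_def B_def using tilted_pos[of nu, OF pos] by (auto intro: sum_pos)
  have mixture_pos: "(\<Sum>x\<in>UNIV. tilted nu a (u *\<^sub>R b + v *\<^sub>R c) x) > 0"
    using tilted_pos[of nu, OF pos] by (auto intro: sum_pos)
  have "(\<Sum>x\<in>UNIV. tilted nu a (u *\<^sub>R b + v *\<^sub>R c) x) \<le> A powr u * B powr v"
    unfolding A_def B_def tilted_add[OF pos] using tilted_pos[of nu, OF pos] uv
    by (intro Holder_sum_powr) auto
  then have "ln (\<Sum>x\<in>UNIV. tilted nu a (u *\<^sub>R b + v *\<^sub>R c) x) \<le> ln (A powr u * B powr v)"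
    using mixture_pos by simp
  also have "\<dots> = u * ln A + v * ln B"
    using A B by (simp add: ln_mult)
  finally show "u * phi nu a b + v * phi nu a c \<le> phi nu a (u *\<^sub>R b + v *\<^sub>R c)"
    unfolding phi_eq_tilted A_def B_def by simp
qed

lemma continuous_phi:
  assumes pos: "\<And>i a x. nu i a x > 0"
  shows "continuous_on UNIV (phi nu a)"
proof -
  have "(\<Sum>x\<in>UNIV. tilted nu a b x) \<noteq> 0" for b
    using tilted_pos[of nu, OF pos] by (simp add: sum_pos order_less_imp_not_eq2)
  then show ?thesis
    using pos unfolding phi_def[abs_def] tilted_def
    by (auto intro!: continuous_intros simp: order_less_imp_not_eq2)
qed

lemma KL_ge_neg_ln_sum:
  assumes Q: "Q \<in> distrs" and P: "\<And>x. P x > 0"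
  shows "- ln (\<Sum>x\<in>UNIV. P x) \<le> KL Q P"
proof -
  define Z where "Z = (\<Sum>x\<in>UNIV. P x)"
  have Z: "Z > 0" unfolding Z_def using P by (auto intro: sum_pos)
  have Q0: "\<And>x. 0 \<le> Q x" and Q1: "(\<Sum>x\<in>UNIV. Q x) = 1"
    using Q unfolding distrs_def by auto
  have pointwise: "Q x * - ln Z + (Q x - P x / Z) \<le> (if Q x = 0 then 0 else Q x * ln (Q x / P x))" for x
  proof (cases "Q x = 0")
    case True
    then show ?thesis using P[of x] Z by simp
  next
    case False
    then have Qx: "Q x > 0" using Q0[of x] by simp
    define t where "t = P x / (Q x * Z)"
    have "t > 0" unfolding t_def using Qx P[of x] Z by simp
    then have "Q x * ln t \<le> Q x * (t - 1)"
      using Qx ln_le_minus_one by (intro mult_left_mono) auto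
    moreover have "ln t = - ln (Q x / P x) - ln Z"
      unfolding t_def using Qx P[of x] Z by (simp add: ln_div ln_mult)
    moreover have "Q x * (t - 1) = P x / Z - Q x"
      unfolding t_def using Qx Z by (simp add: field_simps)
    ultimately show ?thesis using False by (simp add: algebra_simps)
  qed
  have "(\<Sum>x\<in>UNIV. Q x * - ln Z + (Q x - P x / Z)) = - ln Z"
    using Z by (simp add: sum.distrib sum_subtractf Q1 flip: sum_distrib_right sum_divide_distrib Z_def)
  moreover have "(\<Sum>x\<in>UNIV. Q x * - ln Z + (Q x - P x / Z)) \<le> KL Q P"
    unfolding KL_def by (rule sum_mono) (rule pointwise)
  ultimately show ?thesis unfolding Z_def by simp
qed

lemma sum_KL_eq_KL_tilted:
  fixes nu :: "'m::finite \<Rightarrow> 'a \<Rightarrow> 'x::finite \<Rightarrow> real"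
  assumes pos: "\<And>i a x. nu i a x > 0" and beta: "beta \<in> simplexm" and Q: "Q \<in> distrs"
  shows "(\<Sum>i\<in>UNIV. beta $ i * KL Q (nu i a)) = KL Q (tilted nu a beta)"
proof -
  have beta1: "(\<Sum>i\<in>UNIV. beta $ i) = 1" using beta unfolding simplexm_def by auto
  have ln_tilted: "ln (tilted nu a beta x) = (\<Sum>i\<in>UNIV. beta $ i * ln (nu i a x))" for x
    unfolding tilted_def using pos by (simp add: ln_prod order_less_imp_not_eq2 ln_powr)
  have "(\<Sum>i\<in>UNIV. beta $ i * (Q x * ln (Q x / nu i a x))) = Q x * ln (Q x / tilted nu a beta x)"
    if "Q x > 0" for x
  proof -
    have "(\<Sum>i\<in>UNIV. beta $ i * (Q x * ln (Q x / nu i a x)))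
        = (\<Sum>i\<in>UNIV. Q x * ln (Q x) * beta $ i - Q x * (beta $ i * ln (nu i a x)))"
    proof (rule sum.cong)
      fix i
      have ln_quotient: "ln (Q x / nu i a x) = ln (Q x) - ln (nu i a x)"
        using that pos[of i a x] by (simp add: ln_div)
      show "beta $ i * (Q x * ln (Q x / nu i a x))
          = Q x * ln (Q x) * beta $ i - Q x * (beta $ i * ln (nu i a x))"
        unfolding ln_quotient by (simp add: algebra_simps)
    qed simp
    also have "\<dots> = Q x * ln (Q x) - Q x * ln (tilted nu a beta x)"
      by (simp add: sum_subtractf beta1 ln_tilted flip: sum_distrib_left)
    also have "\<dots> = Q x * ln (Q x / tilted nu a beta x)"
      using that tilted_pos[of nu a beta x, OF pos] by (simp add: ln_div right_diff_distrib)
    finally show ?thesis .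
  qed
  moreover have "\<And>x. Q x \<noteq> 0 \<Longrightarrow> Q x > 0" using Q unfolding distrs_def by (simp add: order_le_neq_trans)
  ultimately show ?thesis
    unfolding KL_def sum_distrib_left by (subst sum.swap) (auto intro!: sum.cong)
qed

lemma phi_le_sum_KL:
  fixes nu :: "'m::finite \<Rightarrow> 'a \<Rightarrow> 'x::finite \<Rightarrow> real"
  assumes pos: "\<And>i a x. nu i a x > 0" and beta: "beta \<in> simplexm" and Q: "Q \<in> distrs"
  shows "phi nu a beta \<le> (\<Sum>i\<in>UNIV. beta $ i * KL Q (nu i a))"
proof -
  have "- ln (\<Sum>x\<in>UNIV. tilted nu a beta x) \<le> KL Q (tilted nu a beta)"
    using Q tilted_pos[of nu, OF pos] by (rule KL_ge_neg_ln_sum)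
  also have "\<dots> = (\<Sum>i\<in>UNIV. beta $ i * KL Q (nu i a))"
    using pos beta Q by (rule sum_KL_eq_KL_tilted[symmetric])
  finally show ?thesis unfolding phi_eq_tilted .
qed

lemma convex_simplexm: "convex simplexm"
  unfolding convex_def simplexm_def
  by (auto simp: sum.distrib simp flip: sum_distrib_left)

lemma closed_simplexm: "closed (simplexm :: (real, 'm::finite) vec set)"
proof -
  have eq: "(simplexm :: (real, 'm) vec set) = (\<Inter>i. {b. 0 \<le> b $ i}) \<inter> {b. (\<Sum>i\<in>UNIV. b $ i) = 1}"
    unfolding simplexm_def by auto
  show ?thesis
    unfolding eq by (intro closed_Int closed_INT ballI closed_Collect_le closed_Collect_eq continuous_intros)
qed

lemma betaij_in_simplexm: "t \<in> {0..1} \<Longrightarrow> betaij i j t \<in> simplexm"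
  unfolding simplexm_def betaij_def axis_def by (auto simp: sum.distrib simp flip: sum_distrib_left)

lemma le_Ifun_iff: "r \<le> Ifun nu b \<longleftrightarrow> (\<forall>a. r \<le> phi nu a b)"
  unfolding Ifun_def by simp

lemma le_Lfun_iff: "r \<le> Lfun nu b \<longleftrightarrow> (\<exists>a. r \<le> phi nu a b)"
  unfolding Lfun_def by (simp add: Max_ge_iff)

lemma Ifun_le_phi: "Ifun nu b \<le> phi nu a b"
  using le_Ifun_iff by blast

lemma Lfun_attained: "\<exists>a. Lfun nu b = phi nu a b"
proof -
  have "Lfun nu b \<in> range (\<lambda>a. phi nu a b)"
    unfolding Lfun_def by (rule Max_in) auto
  then show ?thesis by auto
qed

lemma Ifun_le_Lfun: "Ifun nu b \<le> Lfun nu b"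
  using le_Ifun_iff le_Lfun_iff by blast

lemma concave_Ifun:
  fixes nu :: "'m::finite \<Rightarrow> 'a::finite \<Rightarrow> 'x::finite \<Rightarrow> real"
  assumes pos: "\<And>i a x. nu i a x > 0"
  shows "concave_on UNIV (Ifun nu)"
  unfolding concave_on_iff
proof (intro conjI convex_UNIV ballI allI impI)
  fix b c :: "(real, 'm) vec" and u v :: real
  assume uv: "0 \<le> u" "0 \<le> v" "u + v = 1"
  show "u * Ifun nu b + v * Ifun nu c \<le> Ifun nu (u *\<^sub>R b + v *\<^sub>R c)"
    unfolding le_Ifun_iff
  proof
    fix a
    have "u * Ifun nu b + v * Ifun nu c \<le> u * phi nu a b + v * phi nu a c"
      using uv by (intro add_mono mult_left_mono Ifun_le_phi)
    also have "\<dots> \<le> phi nu a (u *\<^sub>R b + v *\<^sub>R c)"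
      using concave_phi[of nu a, OF pos] uv unfolding concave_on_iff by simp
    finally show "u * Ifun nu b + v * Ifun nu c \<le> phi nu a (u *\<^sub>R b + v *\<^sub>R c)" .
  qed
qed

definition hypograph :: "'a set \<Rightarrow> ('a \<Rightarrow> real) \<Rightarrow> ('a \<times> real) set" where
  "hypograph S f = {(x, r). x \<in> S \<and> r \<le> f x}"

lemma mem_hypograph [simp]: "(x, r) \<in> hypograph S f \<longleftrightarrow> x \<in> S \<and> r \<le> f x"
  unfolding hypograph_def by simp

lemma convex_hypograph:
  assumes "concave_on S f"
  shows "convex (hypograph S f)"
proof (rule convexI, clarify)
  fix x r y s and u v :: real
  assume x: "(x, r) \<in> hypograph S f" and y: "(y, s) \<in> hypograph S f"
    and uv: "0 \<le> u" "0 \<le> v" "u + v = 1"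
  have "u *\<^sub>R x + v *\<^sub>R y \<in> S"
    using assms x y uv unfolding concave_on_iff convex_def by auto
  moreover have "u * r + v * s \<le> u * f x + v * f y"
    using x y uv by (intro add_mono mult_left_mono) auto
  moreover have "u * f x + v * f y \<le> f (u *\<^sub>R x + v *\<^sub>R y)"
    using assms x y uv unfolding concave_on_iff by auto
  ultimately show "u *\<^sub>R (x, r) + v *\<^sub>R (y, s) \<in> hypograph S f"
    by simp
qed

lemma closed_hypograph:
  assumes "closed S" and "continuous_on UNIV f"
  shows "closed (hypograph S f)"
proof -
  have "continuous_on UNIV (\<lambda>q. f (fst q))"
    using assms(2) continuous_on_fst[OF continuous_on_id] by (rule continuous_on_compose2) simp
  then have "closed {q. snd q \<le> f (fst q)}"
    by (intro closed_Collect_le continuous_on_snd continuous_on_id)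
  moreover have "hypograph S f = (S \<times> UNIV) \<inter> {q. snd q \<le> f (fst q)}"
    unfolding hypograph_def by auto
  ultimately show ?thesis
    using assms(1) by (simp add: closed_Int closed_Times)
qed

lemma convex_hull_finite_image:
  assumes "finite I"
  shows "convex hull (f ` I) = {\<Sum>i\<in>I. c i *\<^sub>R f i | c. (\<forall>i\<in>I. 0 \<le> c i) \<and> sum c I = 1}"
proof -
  have "convex hull (f ` I) = convex hull (\<Union>i\<in>I. {f i})"
    by (simp add: UNION_singleton_eq_range)
  also have "\<dots> = {\<Sum>i\<in>I. c i *\<^sub>R s i | c s. (\<forall>i\<in>I. 0 \<le> c i) \<and> sum c I = 1 \<and> (\<forall>i\<in>I. s i \<in> {f i})}"
    using assms by (intro convex_hull_finite_union) auto
  also have "\<dots> = {\<Sum>i\<in>I. c i *\<^sub>R f i | c. (\<forall>i\<in>I. 0 \<le> c i) \<and> sum c I = 1}"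
    by (auto intro!: sum.cong)
  finally show ?thesis .
qed

lemma convex_hull_Un_subset:
  fixes S T :: "'a::euclidean_space set"
  assumes "convex S" "convex T" "S \<subseteq> D" "T \<subseteq> D"
    and "\<And>s t u v. s \<in> S \<Longrightarrow> t \<in> T \<Longrightarrow> 0 \<le> u \<Longrightarrow> 0 \<le> v \<Longrightarrow> u + v = 1 \<Longrightarrow> u *\<^sub>R s + v *\<^sub>R t \<in> D"
  shows "convex hull (S \<union> T) \<subseteq> D"
proof (cases "S = {} \<or> T = {}")
  case True
  then show ?thesis
    using assms(1-4) hull_same[of convex S] hull_same[of convex T] by auto
next
  case False
  then have "convex hull (S \<union> T)
      = {u *\<^sub>R s + v *\<^sub>R t | u v s t. 0 \<le> u \<and> 0 \<le> v \<and> u + v = 1 \<and> s \<in> S \<and> t \<in> T}"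
    using assms(1,2) by (intro convex_hull_union_two) auto
  then show ?thesis
    using assms(5) by auto
qed

lemma inner_simplexm_affine_vec:
  assumes "b \<in> simplexm"
  shows "inner b (\<chi> i. (c - a $ i) / d) = (c - inner a b) / d"
proof -
  have "inner b (\<chi> i. (c - a $ i) / d) = (\<Sum>i\<in>UNIV. c * b $ i - a $ i * b $ i) / d"
    by (simp add: inner_vec_def sum_divide_distrib algebra_simps)
  also have "\<dots> = (c * (\<Sum>i\<in>UNIV. b $ i) - (\<Sum>i\<in>UNIV. a $ i * b $ i)) / d"
    by (simp add: sum_subtractf sum_distrib_left)
  also have "\<dots> = (c - inner a b) / d"
    using assms by (simp add: simplexm_def inner_vec_def)
  finally show ?thesis .
qed

lemma linear_majorant_separating:
  fixes C :: "((real, 'm::finite) vec \<times> real) set"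
  assumes "convex C" "closed C" and C: "C \<subseteq> simplexm \<times> UNIV"
    and inC: "(beta, s) \<in> C" and notinC: "(beta, t) \<notin> C" and "s \<le> t"
  shows "\<exists>z. (\<forall>(b, r)\<in>C. r < inner b z) \<and> inner beta z < t"
proof -
  obtain a1 a0 c where sep_pt: "inner a1 beta + a0 * t < c"
    and sep_C: "\<And>b r. (b, r) \<in> C \<Longrightarrow> c < inner a1 b + a0 * r"
    using separating_hyperplane_closed_point[OF assms(1,2) notinC] by fastforce
  txt \<open>The point \<open>(beta, s)\<close> of \<open>C\<close> below \<open>(beta, t)\<close> makes the hyperplane non-vertical.\<close>
  have "a0 * (t - s) < 0"
    using sep_pt sep_C[OF inC] by (simp add: algebra_simps)
  then have a0: "a0 < 0"
    using \<open>s \<le> t\<close> by (simp add: mult_less_0_iff)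
  define z where "z = (\<chi> i. (c - a1 $ i) / a0)"
  have "r < inner b z" if "(b, r) \<in> C" for b r
    using sep_C[OF that] C that a0 unfolding z_def
    by (auto simp: inner_simplexm_affine_vec pos_less_divide_eq neg_less_divide_eq mult.commute)
  moreover have "inner beta z < t"
    using sep_pt C inC a0 unfolding z_def
    by (auto simp: inner_simplexm_affine_vec neg_divide_less_eq mult.commute)
  ultimately show ?thesis by blast
qed

lemma Shat_eq_INT: "Shat nu R bsel = (\<Inter>b\<in>simplexm. {y. concave_env (Iprime nu R bsel) b \<le> inner b y})"
  unfolding Shat_def by auto

lemma closed_Shat: "closed (Shat nu R bsel)"
  unfolding Shat_eq_INT by (intro closed_INT ballI closed_halfspace_ge)

lemma convex_Shat: "convex (Shat nu R bsel)"
  unfolding Shat_eq_INT by (intro convex_INT ballI convex_halfspace_ge)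

lemma Shat_add_axis:
  assumes "y \<in> Shat nu R bsel"
  shows "y + axis i 1 \<in> Shat nu R bsel"
  using assms unfolding Shat_def simplexm_def
  by (auto simp: inner_add_right inner_axis intro: add_increasing2)

lemma linear_majorant_in_Shat:
  fixes nu :: "'m::{finite,linorder} \<Rightarrow> 'a::finite \<Rightarrow> 'x::finite \<Rightarrow> real"
  assumes "\<And>c. c \<in> simplexm \<Longrightarrow> Iprime nu R bsel c \<le> inner c z"
  shows "z \<in> Shat nu R bsel"
  unfolding Shat_def
proof (intro CollectI ballI)
  fix b :: "(real, 'm) vec"
  assume b: "b \<in> simplexm"
  have "concave_on simplexm (\<lambda>c. inner c z)"
    unfolding concave_on_iff using convex_simplexm by (simp add: inner_add_left)
  then have "inner b z \<in> {h b |h. concave_on simplexm h \<and> (\<forall>c\<in>simplexm. Iprime nu R bsel c \<le> h c)}"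
    using assms by (intro CollectI exI[of _ "\<lambda>c. inner c z"]) simp
  moreover have "bdd_below {h b |h. concave_on simplexm h \<and> (\<forall>c\<in>simplexm. Iprime nu R bsel c \<le> h c)}"
    using b by (intro bdd_belowI[of _ "Iprime nu R bsel b"]) auto
  ultimately show "concave_env (Iprime nu R bsel) b \<le> inner b z"
    unfolding concave_env_def by (rule cInf_lower)
qed

definition tilde_betas :: "('m::{finite,linorder} \<Rightarrow> 'a::finite \<Rightarrow> 'x::finite \<Rightarrow> real) \<Rightarrow> real
    \<Rightarrow> ('m \<Rightarrow> 'm \<Rightarrow> real) \<Rightarrow> (real, 'm) vec set" where
  "tilde_betas nu R bsel = (\<lambda>(i, j). betaij i j (bsel i j)) ` Mset nu R"

lemma Iprime_eq: "Iprime nu R bsel b = (if b \<in> tilde_betas nu R bsel then R else Ifun nu b)"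
  unfolding Iprime_def tilde_betas_def by auto

lemma Lfun_ge_convex_comb:
  fixes nu :: "'m::finite \<Rightarrow> 'a::finite \<Rightarrow> 'x::finite \<Rightarrow> real"
  assumes pos: "\<And>i a x. nu i a x > 0" and "0 \<le> u" "0 \<le> v" "u + v = 1"
  shows "u * Ifun nu b + v * Lfun nu c \<le> Lfun nu (u *\<^sub>R b + v *\<^sub>R c)"
proof -
  obtain a where a: "Lfun nu c = phi nu a c" using Lfun_attained by blast
  have "u * Ifun nu b + v * Lfun nu c \<le> u * phi nu a b + v * phi nu a c"
    unfolding a using assms(2,3) by (intro add_mono mult_left_mono Ifun_le_phi) simp_all
  also have "\<dots> \<le> phi nu a (u *\<^sub>R b + v *\<^sub>R c)"
    using concave_phi[of nu a, OF pos] assms(2-4) unfolding concave_on_iff by simp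
  finally show ?thesis using le_Lfun_iff by blast
qed

lemma closed_convex_hull_below_Lfun:
  fixes nu :: "'m::finite \<Rightarrow> 'a::finite \<Rightarrow> 'x::finite \<Rightarrow> real"
  assumes pos: "\<And>i a x. nu i a x > 0" and T: "T \<subseteq> simplexm"
    and level: "\<And>b. b \<in> convex hull T \<Longrightarrow> R \<le> Lfun nu b"
  shows "closure (convex hull (hypograph simplexm (Ifun nu) \<union> ((convex hull T) \<times> {..R})))
    \<subseteq> hypograph simplexm (Lfun nu)"
proof (rule closure_minimal)
  have hull_T: "convex hull T \<subseteq> simplexm"
    using T convex_simplexm by (rule hull_minimal)
  have "concave_on simplexm (Ifun nu)"
    using concave_Ifun[of nu, OF pos] convex_simplexm
    unfolding concave_on_def by (blast intro: convex_on_subset)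
  then show "convex hull (hypograph simplexm (Ifun nu) \<union> ((convex hull T) \<times> {..R}))
      \<subseteq> hypograph simplexm (Lfun nu)"
  proof (intro convex_hull_Un_subset convex_hypograph convex_Times convex_convex_hull convex_real_interval)
    show "hypograph simplexm (Ifun nu) \<subseteq> hypograph simplexm (Lfun nu)"
      unfolding hypograph_def using Ifun_le_Lfun by (blast intro: order_trans)
    show "(convex hull T) \<times> {..R} \<subseteq> hypograph simplexm (Lfun nu)"
    proof
      fix w
      assume "w \<in> (convex hull T) \<times> {..R}"
      then show "w \<in> hypograph simplexm (Lfun nu)"
        using hull_T level[of "fst w"] by (cases w) auto
    qed
    fix x w and u v :: real
    assume "x \<in> hypograph simplexm (Ifun nu)" "w \<in> (convex hull T) \<times> {..R}"
      and uv: "0 \<le> u" "0 \<le> v" "u + v = 1"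
    then obtain b r c s where x: "x = (b, r)" "b \<in> simplexm" "r \<le> Ifun nu b"
      and w: "w = (c, s)" "c \<in> convex hull T" "s \<le> R"
      by (cases w) (auto simp: hypograph_def)
    have "u * r + v * s \<le> u * Ifun nu b + v * Lfun nu c"
      using x w level[of c] uv by (intro add_mono mult_left_mono) auto
    also have "\<dots> \<le> Lfun nu (u *\<^sub>R b + v *\<^sub>R c)"
      using pos uv by (rule Lfun_ge_convex_comb)
    finally have "u * r + v * s \<le> Lfun nu (u *\<^sub>R b + v *\<^sub>R c)" .
    moreover have "u *\<^sub>R b + v *\<^sub>R c \<in> simplexm"
      using convex_simplexm x(2) w(2) hull_T uv unfolding convex_def by blast
    ultimately show "u *\<^sub>R x + v *\<^sub>R w \<in> hypograph simplexm (Lfun nu)"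
      unfolding x w by simp
  qed
  have "hypograph simplexm (Lfun nu) = (\<Union>a. hypograph simplexm (phi nu a))"
    by (auto simp: hypograph_def le_Lfun_iff)
  moreover have "closed (hypograph simplexm (phi nu a))" for a
    using closed_simplexm continuous_phi[of nu, OF pos] by (rule closed_hypograph)
  ultimately show "closed (hypograph simplexm (Lfun nu))"
    by (simp add: closed_UN)
qed

lemma Shat_inner_below_Lfun:
  fixes nu :: "'m::{finite,linorder} \<Rightarrow> 'a::finite \<Rightarrow> 'x::finite \<Rightarrow> real"
  assumes pos: "\<And>i a x. nu i a x > 0" and T: "tilde_betas nu R bsel \<subseteq> simplexm"
    and level: "\<And>b. b \<in> convex hull (tilde_betas nu R bsel) \<Longrightarrow> R \<le> Lfun nu b"
    and beta: "beta \<in> simplexm" and "e > 0"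
  shows "\<exists>z\<in>Shat nu R bsel. inner beta z < Lfun nu beta + e"
proof -
  define A where "A = hypograph simplexm (Ifun nu)"
  define B where "B = (convex hull (tilde_betas nu R bsel)) \<times> {..R}"
  define C where "C = closure (convex hull (A \<union> B))"
  have C_below_Lfun: "C \<subseteq> hypograph simplexm (Lfun nu)"
    unfolding C_def A_def B_def using pos T level by (rule closed_convex_hull_below_Lfun)
  have AB_C: "A \<union> B \<subseteq> C"
    unfolding C_def using hull_subset[of "A \<union> B" convex] closure_subset by (rule subset_trans)
  have "\<exists>z. (\<forall>(b, r)\<in>C. r < inner b z) \<and> inner beta z < Lfun nu beta + e"
  proof (rule linear_majorant_separating)
    show "convex C" "closed C"
      unfolding C_def by (simp_all add: convex_closure)
    show "C \<subseteq> simplexm \<times> UNIV"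
      using C_below_Lfun by (auto simp: hypograph_def)
    show "(beta, Ifun nu beta) \<in> C"
      using AB_C beta by (auto simp: A_def)
    show "(beta, Lfun nu beta + e) \<notin> C"
      using C_below_Lfun \<open>e > 0\<close> by auto
    show "Ifun nu beta \<le> Lfun nu beta + e"
      using Ifun_le_Lfun[of nu beta] \<open>e > 0\<close> by simp
  qed
  then obtain z where z_above: "\<And>b r. (b, r) \<in> C \<Longrightarrow> r < inner b z"
    and z_beta: "inner beta z < Lfun nu beta + e"
    by blast
  have "z \<in> Shat nu R bsel"
  proof (rule linear_majorant_in_Shat)
    fix c :: "(real, 'm) vec"
    assume "c \<in> simplexm"
    then have "(c, Iprime nu R bsel c) \<in> A \<union> B"
      by (auto simp: A_def B_def Iprime_eq hull_inc)
    then show "Iprime nu R bsel c \<le> inner c z"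
      using AB_C z_above[of c "Iprime nu R bsel c"] by auto
  qed
  with z_beta show ?thesis by blast
qed

lemma closest_point_upward_closed:
  fixes S :: "(real, 'm::finite) vec set"
  assumes "convex S" "closed S" "S \<noteq> {}" and up: "\<And>x i. x \<in> S \<Longrightarrow> x + axis i 1 \<in> S"
    and "y \<notin> S"
  obtains beta s where "beta \<in> simplexm" "s > 0" "y - closest_point S y = - s *\<^sub>R beta"
    "\<And>z. z \<in> S \<Longrightarrow> inner beta (closest_point S y) \<le> inner beta z"
proof -
  define p where "p = closest_point S y"
  define d where "d = y - p"
  have "p \<in> S"
    unfolding p_def using assms(2,3) by (rule closest_point_in_set)
  have obtuse: "inner d (z - p) \<le> 0" if "z \<in> S" for z
    unfolding d_def p_def using assms(1,2) that by (rule closest_point_dot)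
  have d_nonpos: "d $ i \<le> 0" for i
    using obtuse[OF up[OF \<open>p \<in> S\<close>, of i]] by (simp add: inner_axis)
  define s where "s = (\<Sum>i\<in>UNIV. - d $ i)"
  have "d \<noteq> 0"
    using \<open>y \<notin> S\<close> \<open>p \<in> S\<close> unfolding d_def by auto
  then have "s \<noteq> 0"
    using d_nonpos unfolding s_def by (subst sum_nonneg_eq_0_iff) (auto simp: vec_eq_iff)
  then have "s > 0"
    unfolding s_def using d_nonpos by (simp add: order_le_neq_trans sum_nonneg)
  define beta where "beta = (- 1 / s) *\<^sub>R d"
  have "(\<Sum>i\<in>UNIV. beta $ i) = (\<Sum>i\<in>UNIV. - d $ i) / s"
    unfolding beta_def by (simp add: sum_negf flip: sum_divide_distrib)
  then have "beta \<in> simplexm"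
    using d_nonpos \<open>s > 0\<close> by (simp add: simplexm_def beta_def divide_nonpos_pos flip: s_def)
  moreover have d_eq: "d = - s *\<^sub>R beta"
    unfolding beta_def using \<open>s > 0\<close> by simp
  moreover have "inner beta p \<le> inner beta z" if "z \<in> S" for z
    using obtuse[OF that] \<open>s > 0\<close> unfolding d_eq
    by (simp add: inner_diff_right mult_le_0_iff)
  ultimately show ?thesis
    using that \<open>s > 0\<close> unfolding d_def p_def by blast
qed

lemma tilde_betas_subset_simplexm:
  assumes "\<And>i j. (i, j) \<in> Mset nu R \<Longrightarrow> bsel i j \<in> {0..1}"
  shows "tilde_betas nu R bsel \<subseteq> simplexm"
  using assms by (auto simp: tilde_betas_def betaij_in_simplexm)

lemma Lfun_ge_on_convex_hull_tilde_betas: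
  assumes hyp: "\<And>lam. (\<forall>p\<in>Mset nu R. 0 \<le> lam p) \<Longrightarrow> (\<Sum>p\<in>Mset nu R. lam p) = 1 \<Longrightarrow>
      R \<le> Lfun nu (\<Sum>(i, j)\<in>Mset nu R. lam (i, j) *\<^sub>R betaij i j (bsel i j))"
    and "b \<in> convex hull (tilde_betas nu R bsel)"
  shows "R \<le> Lfun nu b"
proof -
  have "convex hull (tilde_betas nu R bsel) =
    {\<Sum>(i, j)\<in>Mset nu R. lam (i, j) *\<^sub>R betaij i j (bsel i j) | lam.
      (\<forall>p\<in>Mset nu R. 0 \<le> lam p) \<and> (\<Sum>p\<in>Mset nu R. lam p) = 1}"
    unfolding tilde_betas_def
    by (subst convex_hull_finite_image) (simp_all add: case_prod_beta)
  then show ?thesis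
    using assms by auto
qed

lemma closest_point_Shat:
  fixes nu :: "'m::{finite,linorder} \<Rightarrow> 'a::finite \<Rightarrow> 'x::finite \<Rightarrow> real"
  assumes pos: "\<And>i a x. nu i a x > 0"
    and bsel: "\<And>i j. (i, j) \<in> Mset nu R \<Longrightarrow> bsel i j \<in> {0..1}"
    and hyp: "\<And>lam. (\<forall>p\<in>Mset nu R. 0 \<le> lam p) \<Longrightarrow> (\<Sum>p\<in>Mset nu R. lam p) = 1 \<Longrightarrow>
      R \<le> Lfun nu (\<Sum>(i, j)\<in>Mset nu R. lam (i, j) *\<^sub>R betaij i j (bsel i j))"
    and y: "y \<notin> Shat nu R bsel"
  obtains beta s where "beta \<in> simplexm" "s > 0"
    "y - closest_point (Shat nu R bsel) y = - s *\<^sub>R beta"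
    "inner beta (closest_point (Shat nu R bsel) y) \<le> Lfun nu beta"
proof -
  let ?S = "Shat nu R bsel" and ?p = "closest_point (Shat nu R bsel) y"
  have below_Lfun: "\<exists>z\<in>?S. inner beta z < Lfun nu beta + e" if "beta \<in> simplexm" "e > 0" for beta e
    using pos tilde_betas_subset_simplexm[OF bsel] Lfun_ge_on_convex_hull_tilde_betas[OF hyp] that
    by (rule Shat_inner_below_Lfun)
  have "betaij i i 1 \<in> simplexm" for i
    by (rule betaij_in_simplexm) simp
  then have S_ne: "?S \<noteq> {}"
    using below_Lfun[of _ 1] by (metis empty_iff zero_less_one)
  obtain beta s where beta: "beta \<in> simplexm" and "s > 0" and y_p: "y - ?p = - s *\<^sub>R beta"
    and p_min: "\<And>z. z \<in> ?S \<Longrightarrow> inner beta ?p \<le> inner beta z"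
    using closest_point_upward_closed[OF convex_Shat closed_Shat S_ne Shat_add_axis y] by metis
  have "inner beta ?p \<le> Lfun nu beta"
  proof (rule field_le_epsilon)
    fix e :: real
    assume "e > 0"
    then show "inner beta ?p \<le> Lfun nu beta + e"
      using below_Lfun[OF beta] p_min by (meson less_imp_le order_trans)
  qed
  with beta \<open>s > 0\<close> y_p show ?thesis
    by (rule that)
qed

lemma best_arm_payoff:
  fixes nu :: "'m::finite \<Rightarrow> 'a::finite \<Rightarrow> 'x::finite \<Rightarrow> real"
  assumes pos: "\<And>i a x. nu i a x > 0" and beta: "beta \<in> simplexm"
  obtains w where "w \<in> distrs"
    "\<And>Q. (\<And>a. Q a \<in> distrs) \<Longrightarrow> Lfun nu beta \<le> inner beta (payoff nu w Q)"
proof -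
  obtain a where a: "Lfun nu beta = phi nu a beta"
    using Lfun_attained by blast
  define w where "w = (\<lambda>a'. if a' = a then 1 else 0 :: real)"
  show ?thesis
  proof (rule that)
    show "w \<in> distrs"
      unfolding distrs_def w_def by simp
    fix Q :: "'a \<Rightarrow> 'x \<Rightarrow> real"
    assume "\<And>a. Q a \<in> distrs"
    have "payoff nu w Q = (\<chi> i. KL (Q a) (nu i a))"
      unfolding payoff_def w_def
      by (simp add: vec_eq_iff if_distrib[of "\<lambda>c. c * _"] cong: if_cong)
    then have "inner beta (payoff nu w Q) = (\<Sum>i\<in>UNIV. beta $ i * KL (Q a) (nu i a))"
      by (simp add: inner_vec_def)
    also have "phi nu a beta \<le> \<dots>"
      using pos beta \<open>Q a \<in> distrs\<close> by (rule phi_le_sum_KL)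
    finally show "Lfun nu beta \<le> inner beta (payoff nu w Q)"
      unfolding a .
  qed
qed

theorem mainTheorem14:
  fixes nu :: "'m::{finite,linorder} \<Rightarrow> 'a::finite \<Rightarrow> 'x::finite \<Rightarrow> real"
    and R :: real and bsel :: "'m \<Rightarrow> 'm \<Rightarrow> real"
  assumes m2: "CARD('m) \<ge> 2"
    and nu_distr: "\<And>i a. nu i a \<in> distrs"
    and nu_pos: "\<And>i a x. nu i a x > 0"
    and bsel: "\<And>i j. (i, j) \<in> Mset nu R \<Longrightarrow> bsel i j \<in> {0..1}"
    and hyp: "\<And>lam. (\<forall>p\<in>Mset nu R. 0 \<le> lam p) \<Longrightarrow> (\<Sum>p\<in>Mset nu R. lam p) = 1 \<Longrightarrow>
               R \<le> Lfun nu (\<Sum>(i, j)\<in>Mset nu R. lam (i, j) *\<^sub>R betaij i j (bsel i j))"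
  shows "\<forall>y. y \<notin> Shat nu R bsel \<longrightarrow>
           (\<exists>w\<in>distrs. \<forall>Q. (\<forall>a. Q a \<in> distrs) \<longrightarrow>
              inner (y - closest_point (Shat nu R bsel) y)
                    (payoff nu w Q - closest_point (Shat nu R bsel) y) \<le> 0)"
proof (intro allI impI)
  fix y
  let ?p = "closest_point (Shat nu R bsel) y"
  assume "y \<notin> Shat nu R bsel"
  then obtain beta s where beta: "beta \<in> simplexm" and "s > 0" and y_p: "y - ?p = - s *\<^sub>R beta"
    and p_le_Lfun: "inner beta ?p \<le> Lfun nu beta"
    using closest_point_Shat[of nu, OF nu_pos bsel hyp] by metis
  obtain w where "w \<in> distrs"
    and w: "\<And>Q. (\<And>a. Q a \<in> distrs) \<Longrightarrow> Lfun nu beta \<le> inner beta (payoff nu w Q)"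
    using best_arm_payoff[of nu, OF nu_pos beta] by metis
  have "inner (y - ?p) (payoff nu w Q - ?p) \<le> 0" if "\<forall>a. Q a \<in> distrs" for Q
    using w[of Q] that p_le_Lfun \<open>s > 0\<close> unfolding y_p
    by (simp add: inner_diff_right mult_le_0_iff)
  with \<open>w \<in> distrs\<close> show "\<exists>w\<in>distrs. \<forall>Q. (\<forall>a. Q a \<in> distrs) \<longrightarrow> inner (y - ?p) (payoff nu w Q - ?p) \<le> 0"
    by blast
qed

end
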